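(* Let $(K,\mathrm{val})$ be a valued field whose residue class field $F$ has characteristic two, and assume every strict unit admits a square root in $K$. Let $A$ be a subring with $B\subseteq A\subseteq K$ and let $\mathcal M$ be a nonzero proper quasi-quadratic module of $A$. Then $S=\mathrm{val}(\mathcal M\setminus\{0\})$ is a well-behaved subset of $\mathrm{val}(A\setminus\{0\})$, and exactly one of the following holds: (1) $S$ has no smallest element, and $\mathcal M=\Gamma_1(S)$; (2) $A=B$, $S$ has a smallest element $g_{\min}$, and $\mathcal M=\Gamma_2(S,M_{g_{\min}}(\mathcal M))$.
   Context: Let $(G,\le)$ be a totally ordered abelian group written multiplicatively with identity $e$, $G^2=\{g^2:g\in G\}$. Let $(K,\mathrm{val})$ be a valued field with surjective valuation $\mathrm{val}:K\to G\cup\{\infty\}$, valuation ring $B=\{x:\mathrm{val}(x)\ge e\}$, residue map $\pi:B\to F$, residue field $F$. A strict unit is $x\in B^\times$ with $\pi(x)=1$. For $g\in G$, $\overline g$ denotes its class in $G/G^2$. A quasi-quadratic module in a commutative ring $R$ is a subset $M$ with $M+M\subseteq M$ and $a^2M\subseteq M$ for all $a\in R$. A pseudo-angular component map is a map $\mathrm{p.an}:K^\times\to F^\times$ such that: (1) $\mathrm{p.an}(u)=\pi(u)$ for $u\in B^\times$; (2) $\mathrm{p.an}(ux)=\pi(u)\mathrm{p.an}(x)$ for $u\in B^\times,x\in K^\times$; (3) for all $g\in G$, $c\in F^\times$ there is $w\in K$ with $\mathrm{val}(w)=g$, $\mathrm{p.an}(w)=c$; (4) for nonzero $x_1,x_2$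 with $x_1+x_2\ne0$: if $\mathrm{val}(x_1)<\mathrm{val}(x_2)$ then $\mathrm{p.an}(x_1+x_2)=\mathrm{p.an}(x_1)$; if $\mathrm{val}(x_1)=\mathrm{val}(x_2)$ and $\mathrm{p.an}(x_1)+\mathrm{p.an}(x_2)\ne0$ then $\mathrm{val}(x_1+x_2)=\mathrm{val}(x_1)$ and $\mathrm{p.an}(x_1+x_2)=\mathrm{p.an}(x_1)+\mathrm{p.an}(x_2)$; (5) if $x,y\in K^\times$, $\overline{\mathrm{val}(x)}=\overline{\mathrm{val}(y)}$ and $\mathrm{p.an}(x)=\mathrm{p.an}(y)$ then $y=u^2x$ for some $u\in K^\times$; (6) for $a,u\in K^\times$ there is $k\in F^\times$ with $\mathrm{p.an}(au^2)=\mathrm{p.an}(a)k^2$. Such a map exists when strict units are squares; fix one. A subset $S\subseteq\mathrm{val}(A\setminus\{0\})$ is well-behaved if (i) $h\le g$ for all $g\in S$ and $h\in\mathrm{val}(A^\times)$, and (ii) $gh\in S$ for all $g\in S$ and $h\in\mathrm{val}(A\setminus\{0\})$. For well-behaved $S$: $\Gamma_1(S)=\{x\in A\setminus\{0\}:\mathrm{val}(x)\in S\}\cup\{0\}$; if $S$ has a smallest element $g_{\min}$ and $M$ is a quasi-quadratic module of $F$: $\Gamma_2(S,M)=\{x\in A:\ (\mathrm{val}(x)=g_{\min}\text{ and }\mathrm{p.an}(x)\in M)\text{ or }\mathrm{val}(x)>g_{\min}\}$ (containing $0$ since $\mathrm{val}(0)=\infty$). For $g\in G$: $M_g(\mathcal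 M)=\{\mathrm{p.an}(x):x\in\mathcal M\setminus\{0\},\ \mathrm{val}(x)=g\}\cup\{0\}$. *)

theory Defs
  imports Main
begin

text \<open>The value group G is written additively (class linordered_ab_group_add):
  the identity e is 0, g^2 is g + g. The valuation val is a total function on K whose value
  at 0 is irrelevant (it stands for infinity); all conditions treat 0 separately.
  The residue map pi is a total function on K, only its restriction to B matters.\<close>

definition valuation_ring :: "('k::field \<Rightarrow> 'g::linordered_ab_group_add) \<Rightarrow> 'k set" where
  "valuation_ring val = {x. x = 0 \<or> val x \<ge> 0}"

definition valued_field ::
  "('k::field \<Rightarrow> 'g::linordered_ab_group_add) \<Rightarrow> ('k \<Rightarrow> 'f::field) \<Rightarrow> bool" where
  "valued_field val \<pi> \<longleftrightarrow>
     (\<forall>x y. x \<noteq> 0 \<longrightarrow> y \<noteq> 0 \<longrightarrow> val (x * y) = val x + val y) \<and>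
     (\<forall>x y. x \<noteq> 0 \<longrightarrow> y \<noteq> 0 \<longrightarrow> x + y \<noteq> 0 \<longrightarrow> val (x + y) \<ge> min (val x) (val y)) \<and>
     (\<forall>g. \<exists>x. x \<noteq> 0 \<and> val x = g) \<and>
     (\<forall>x\<in>valuation_ring val. \<forall>y\<in>valuation_ring val. \<pi> (x + y) = \<pi> x + \<pi> y) \<and>
     (\<forall>x\<in>valuation_ring val. \<forall>y\<in>valuation_ring val. \<pi> (x * y) = \<pi> x * \<pi> y) \<and>
     \<pi> 1 = 1 \<and>
     \<pi> ` valuation_ring val = UNIV \<and>
     (\<forall>x\<in>valuation_ring val. \<pi> x = 0 \<longleftrightarrow> (x = 0 \<or> val x > 0))"

definition B_unit :: "('k::field \<Rightarrow> 'g::linordered_ab_group_add) \<Rightarrow> 'k \<Rightarrow> bool" where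
  "B_unit val u \<longleftrightarrow> u \<noteq> 0 \<and> val u = 0"

definition strict_unit :: "('k::field \<Rightarrow> 'g::linordered_ab_group_add) \<Rightarrow> ('k \<Rightarrow> 'f::field) \<Rightarrow> 'k \<Rightarrow> bool" where
  "strict_unit val \<pi> u \<longleftrightarrow> B_unit val u \<and> \<pi> u = 1"

text \<open>Same class in G/G^2.\<close>
definition same_sq_class :: "'g::linordered_ab_group_add \<Rightarrow> 'g \<Rightarrow> bool" where
  "same_sq_class g h \<longleftrightarrow> (\<exists>k. g = h + k + k)"

definition pseudo_angular ::
  "('k::field \<Rightarrow> 'g::linordered_ab_group_add) \<Rightarrow> ('k \<Rightarrow> 'f::field) \<Rightarrow> ('k \<Rightarrow> 'f) \<Rightarrow> bool" where
  "pseudo_angular val \<pi> pan \<longleftrightarrow>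
     (\<forall>x. x \<noteq> 0 \<longrightarrow> pan x \<noteq> 0) \<and>
     (\<forall>u. B_unit val u \<longrightarrow> pan u = \<pi> u) \<and>
     (\<forall>u x. B_unit val u \<longrightarrow> x \<noteq> 0 \<longrightarrow> pan (u * x) = \<pi> u * pan x) \<and>
     (\<forall>g c. c \<noteq> 0 \<longrightarrow> (\<exists>w. w \<noteq> 0 \<and> val w = g \<and> pan w = c)) \<and>
     (\<forall>x1 x2. x1 \<noteq> 0 \<longrightarrow> x2 \<noteq> 0 \<longrightarrow> x1 + x2 \<noteq> 0 \<longrightarrow>
        (val x1 < val x2 \<longrightarrow> pan (x1 + x2) = pan x1) \<and>
        (val x1 = val x2 \<longrightarrow> pan x1 + pan x2 \<noteq> 0 \<longrightarrow>
           val (x1 + x2) = val x1 \<and> pan (x1 + x2) = pan x1 + pan x2)) \<and>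
     (\<forall>x y. x \<noteq> 0 \<longrightarrow> y \<noteq> 0 \<longrightarrow> same_sq_class (val x) (val y) \<longrightarrow> pan x = pan y \<longrightarrow>
        (\<exists>u. u \<noteq> 0 \<and> y = u * u * x)) \<and>
     (\<forall>a u. a \<noteq> 0 \<longrightarrow> u \<noteq> 0 \<longrightarrow> (\<exists>k. k \<noteq> 0 \<and> pan (a * u * u) = pan a * k * k))"

definition subring :: "'k::field set \<Rightarrow> bool" where
  "subring A \<longleftrightarrow> 0 \<in> A \<and> 1 \<in> A \<and> (\<forall>x\<in>A. \<forall>y\<in>A. x + y \<in> A \<and> x * y \<in> A \<and> - x \<in> A)"

definition quasi_quadratic_module :: "'r::comm_ring set \<Rightarrow> 'r set \<Rightarrow> bool" where
  "quasi_quadratic_module R M \<longleftrightarrow> M \<subseteq> R \<and> (\<forall>x\<in>M. \<forall>y\<in>M. x + y \<in> M) \<and>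
     (\<forall>a\<in>R. \<forall>x\<in>M. a * a * x \<in> M)"

definition ring_units :: "'k::field set \<Rightarrow> 'k set" where
  "ring_units A = {x\<in>A. x \<noteq> 0 \<and> inverse x \<in> A}"

definition well_behaved ::
  "('k::field \<Rightarrow> 'g::linordered_ab_group_add) \<Rightarrow> 'k set \<Rightarrow> 'g set \<Rightarrow> bool" where
  "well_behaved val A S \<longleftrightarrow> S \<subseteq> val ` (A - {0}) \<and>
     (\<forall>g\<in>S. \<forall>h\<in>val ` ring_units A. h \<le> g) \<and>
     (\<forall>g\<in>S. \<forall>h\<in>val ` (A - {0}). g + h \<in> S)"

definition has_min :: "'g::linorder set \<Rightarrow> bool" where
  "has_min S \<longleftrightarrow> (\<exists>g\<in>S. \<forall>h\<in>S. g \<le> h)"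

definition Gamma1 :: "('k::field \<Rightarrow> 'g::linordered_ab_group_add) \<Rightarrow> 'k set \<Rightarrow> 'g set \<Rightarrow> 'k set" where
  "Gamma1 val A S = {x\<in>A. x \<noteq> 0 \<and> val x \<in> S} \<union> {0}"

definition Gamma2 ::
  "('k::field \<Rightarrow> 'g::linordered_ab_group_add) \<Rightarrow> ('k \<Rightarrow> 'f::field) \<Rightarrow> 'k set \<Rightarrow> 'g set \<Rightarrow> 'f set \<Rightarrow> 'k set" where
  "Gamma2 val pan A S M = {x\<in>A. x = 0 \<or> (val x = (LEAST g. g \<in> S) \<and> pan x \<in> M) \<or> val x > (LEAST g. g \<in> S)}"

definition M_g ::
  "('k::field \<Rightarrow> 'g::linordered_ab_group_add) \<Rightarrow> ('k \<Rightarrow> 'f::field) \<Rightarrow> 'g \<Rightarrow> 'k set \<Rightarrow> 'f set" where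
  "M_g val pan g \<M> = {pan x | x. x \<in> \<M> \<and> x \<noteq> 0 \<and> val x = g} \<union> {0}"

end

theory Submission
  imports Defs
begin

text \<open>
  The heart of the matter is that \<M> is closed upwards in valuation: if x \<in> \<M> is nonzero and
  val x < val y, then z = y/x has positive valuation, so z - 1 is a strict unit (its residue is
  -1, which equals 1 in characteristic two); writing z - 1 = s^2 with s \<in> B gives
  y = s^2 x + x \<in> \<M>.
  Everything else follows from this closure property together with a^2 \<M> \<subseteq> \<M>: multiplying by
  squares of elements of negative valuation pushes valuations down, which forces \<M> = A as soon
  as \<M> contains an element of valuation below that of a unit of A, and forces A = B as soon as
  val(\<M> - {0}) has a least element g. In the latter case two elements of valuation g with the
  same pseudo-angular component differ by the square of a unit of B.
\<close>

locale valuation =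
  fixes val :: "'k::field \<Rightarrow> 'g::linordered_ab_group_add" and \<pi> :: "'k \<Rightarrow> 'f::field"
  assumes valued_field: "valued_field val \<pi>"
begin

lemma val_mult: "x \<noteq> 0 \<Longrightarrow> y \<noteq> 0 \<Longrightarrow> val (x * y) = val x + val y"
  using valued_field unfolding valued_field_def by blast

lemma val_add_ge_min: "x \<noteq> 0 \<Longrightarrow> y \<noteq> 0 \<Longrightarrow> x + y \<noteq> 0 \<Longrightarrow> min (val x) (val y) \<le> val (x + y)"
  using valued_field unfolding valued_field_def by blast

lemma residue_add:
  "x \<in> valuation_ring val \<Longrightarrow> y \<in> valuation_ring val \<Longrightarrow> \<pi> (x + y) = \<pi> x + \<pi> y"
  using valued_field unfolding valued_field_def by blast

lemma residue_one: "\<pi> 1 = 1"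
  using valued_field unfolding valued_field_def by blast

lemma residue_eq_0_iff: "x \<in> valuation_ring val \<Longrightarrow> \<pi> x = 0 \<longleftrightarrow> x = 0 \<or> 0 < val x"
  using valued_field unfolding valued_field_def by blast

lemma val_one [simp]: "val 1 = 0"
  using val_mult [of 1 1] by simp

lemma val_minus_one [simp]: "val (- 1) = 0"
  using val_mult [of "- 1" "- 1"] by simp

lemma val_inverse: "x \<noteq> 0 \<Longrightarrow> val (inverse x) = - val x"
  using val_mult [of x "inverse x"] by (simp add: eq_neg_iff_add_eq_0 add.commute)

lemma val_square_mult: "a \<noteq> 0 \<Longrightarrow> x \<noteq> 0 \<Longrightarrow> val (a * a * x) = val a + val a + val x"
  by (simp add: val_mult)

lemma val_square_eq_0_iff: "u \<noteq> 0 \<Longrightarrow> val (u * u) = 0 \<longleftrightarrow> val u = 0"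
  by (simp add: val_mult)

lemma residue_minus_one: "\<pi> (- 1) = - 1"
proof -
  have "1 \<in> valuation_ring val" "- 1 \<in> valuation_ring val"
    by (simp_all add: valuation_ring_def)
  then have "\<pi> 1 + \<pi> (- 1) = \<pi> 0"
    by (metis residue_add add.right_inverse)
  also have "\<pi> 0 = 0"
    using residue_eq_0_iff by (simp add: valuation_ring_def)
  finally show ?thesis
    by (simp add: residue_one eq_neg_iff_add_eq_0 add.commute)
qed

lemma strict_unit_diff_one:
  assumes char2: "(1::'f) + 1 = 0" and z: "z \<noteq> 0" and pos: "0 < val z"
  shows "strict_unit val \<pi> (z - 1)"
proof -
  have zB: "z \<in> valuation_ring val"
    using pos by (simp add: valuation_ring_def less_imp_le)
  have z1: "z - 1 \<noteq> 0"
    using pos by auto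
  have "\<pi> (z - 1) = \<pi> z + \<pi> (- 1)"
    using residue_add [OF zB, of "- 1"] by (simp add: valuation_ring_def)
  also have "\<dots> = - 1"
    using residue_eq_0_iff [OF zB] pos by (simp add: residue_minus_one)
  also have "\<dots> = 1"
    using char2 by (simp add: eq_neg_iff_add_eq_0)
  finally have res: "\<pi> (z - 1) = 1" .
  have "min (val z) (val (- 1)) \<le> val (z - 1)"
    using val_add_ge_min [OF z, of "- 1"] z1 by simp
  then have "0 \<le> val (z - 1)"
    using pos by simp
  moreover have "\<not> 0 < val (z - 1)"
    using residue_eq_0_iff [of "z - 1"] res \<open>0 \<le> val (z - 1)\<close>
    by (simp add: valuation_ring_def)
  ultimately show ?thesis
    unfolding strict_unit_def B_unit_def using z1 res by simp
qed

lemma quasi_quadratic_module_upward_closed: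
  assumes char2: "(1::'f) + 1 = 0"
    and sqrt: "\<forall>u. strict_unit val \<pi> u \<longrightarrow> (\<exists>y. y * y = u)"
    and B: "valuation_ring val \<subseteq> A" and qm: "quasi_quadratic_module A M"
    and x: "x \<in> M" "x \<noteq> 0" and y: "y \<noteq> 0" and less: "val x < val y"
  shows "y \<in> M"
proof -
  define z where "z = y / x"
  have y_eq: "y = z * x"
    using x by (simp add: z_def)
  have "z \<noteq> 0"
    using x y by (simp add: z_def)
  have "val y = val z + val x"
    using x \<open>z \<noteq> 0\<close> by (simp add: y_eq val_mult)
  with less have "0 < val z"
    by simp
  then have unit: "strict_unit val \<pi> (z - 1)"
    using strict_unit_diff_one [OF char2 \<open>z \<noteq> 0\<close>] by blast
  then obtain s where s: "s * s = z - 1"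
    using sqrt by blast
  have "s \<noteq> 0" "val (s * s) = 0"
    using s unit by (auto simp: strict_unit_def B_unit_def)
  then have "s \<in> A"
    using B val_square_eq_0_iff by (auto simp: valuation_ring_def)
  then have "s * s * x + x \<in> M"
    using qm x unfolding quasi_quadratic_module_def by blast
  also have "s * s * x + x = y"
    by (simp add: s y_eq algebra_simps)
  finally show ?thesis .
qed

end

locale upward_closed_module = valuation val \<pi>
  for val :: "'k::field \<Rightarrow> 'g::linordered_ab_group_add" and \<pi> :: "'k \<Rightarrow> 'f::field" +
  fixes A M :: "'k set"
  assumes subring: "subring A"
    and valuation_ring_subset: "valuation_ring val \<subseteq> A"
    and qqm: "quasi_quadratic_module A M"
    and upward_closed: "x \<in> M \<Longrightarrow> x \<noteq> 0 \<Longrightarrow> y \<noteq> 0 \<Longrightarrow> val x < val y \<Longrightarrow> y \<in> M"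
begin

lemma module_subset: "M \<subseteq> A"
  using qqm unfolding quasi_quadratic_module_def by blast

lemma square_mult_mem: "a \<in> A \<Longrightarrow> x \<in> M \<Longrightarrow> a * a * x \<in> M"
  using qqm unfolding quasi_quadratic_module_def by blast

lemma zero_mem: "x \<in> M \<Longrightarrow> 0 \<in> M"
  using square_mult_mem [of 0 x] subring by (simp add: subring_def)

lemma mem_if_val_eq_0: "val u = 0 \<Longrightarrow> u \<in> A"
  using valuation_ring_subset by (auto simp: valuation_ring_def)

lemma square_mult_val_less:
  assumes "a \<in> A" "a \<noteq> 0" "x \<in> M" "x \<noteq> 0" "val a + val a + val x < val y" "y \<noteq> 0"
  shows "y \<in> M"
  using assms square_mult_mem val_square_mult upward_closed
  by (metis mult_eq_0_iff)

lemma ring_subset_module_if_val_less_unit: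
  assumes u: "u \<in> ring_units A" and x: "x \<in> M" "x \<noteq> 0" and less: "val x < val u"
  shows "A \<subseteq> M"
proof
  fix y assume y: "y \<in> A"
  consider "y = 0" | "y \<noteq> 0" "val x < val y" | "y \<noteq> 0" "val y \<le> val x"
    by fastforce
  then show "y \<in> M"
  proof cases
    case 3
    define a where "a = y * inverse u"
    have u': "u \<noteq> 0" "inverse u \<in> A"
      using u by (simp_all add: ring_units_def)
    have "a \<in> A" "a \<noteq> 0"
      using subring y u' 3 by (auto simp: a_def subring_def)
    moreover have "val a = val y - val u"
      using 3 u' by (simp add: a_def val_mult val_inverse)
    moreover have "(val y - val u) + (val y - val u) + val x < val y"
    proof -
      have "(val y - val u) + (val x - val u) < 0"
        using 3 less by (simp add: add_neg_neg)
      then show ?thesis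
        by (simp add: algebra_simps)
    qed
    ultimately show ?thesis
      using square_mult_val_less x 3 by metis
  qed (use zero_mem x upward_closed in blast)+
qed

lemma mult_mem_if_val_ne_0:
  assumes x: "x \<in> M" "x \<noteq> 0" and a: "a \<in> A" "a \<noteq> 0" "val a \<noteq> 0"
  shows "x * a \<in> M"
proof (cases "0 < val a")
  case True
  then show ?thesis
    using upward_closed [OF x] x a by (simp add: val_mult)
next
  case False
  then have "val a + val a + val x < val (x * a)"
    using x a by (simp add: val_mult add.commute add_neg_neg)
  then show ?thesis
    using square_mult_val_less x a by simp
qed

lemma well_behaved:
  assumes proper: "M \<noteq> A"
  shows "well_behaved val A (val ` (M - {0}))"
proof -
  have units_below: "val u \<le> val x" if "u \<in> ring_units A" "x \<in> M" "x \<noteq> 0" for u x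
    using ring_subset_module_if_val_less_unit [OF that] proper module_subset by force
  have shift: "val x + val a \<in> val ` (M - {0})" if "x \<in> M" "x \<noteq> 0" "a \<in> A" "a \<noteq> 0" for x a
  proof (cases "val a = 0")
    case False
    then have "x * a \<in> M - {0}"
      using mult_mem_if_val_ne_0 that by simp
    then show ?thesis
      using that by (force simp: val_mult)
  qed (use that in simp)
  show ?thesis
    unfolding well_behaved_def using module_subset units_below shift by blast
qed

lemma eq_Gamma1:
  assumes "M \<noteq> {}" and no_min: "\<not> has_min (val ` (M - {0}))"
  shows "M = Gamma1 val A (val ` (M - {0}))"
proof
  show "M \<subseteq> Gamma1 val A (val ` (M - {0}))"
    using module_subset unfolding Gamma1_def by blast
next
  show "Gamma1 val A (val ` (M - {0})) \<subseteq> M"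
  proof
    fix y assume y: "y \<in> Gamma1 val A (val ` (M - {0}))"
    show "y \<in> M"
    proof (cases "y = 0")
      case False
      then obtain x where "x \<in> M" "x \<noteq> 0" "val x < val y"
        using y no_min unfolding Gamma1_def has_min_def by force
      then show ?thesis
        using upward_closed False by blast
    qed (use \<open>M \<noteq> {}\<close> zero_mem in blast)
  qed
qed

context
  fixes g\<^sub>0 x\<^sub>0
  assumes x\<^sub>0: "x\<^sub>0 \<in> M" "x\<^sub>0 \<noteq> 0" "val x\<^sub>0 = g\<^sub>0"
    and least: "\<And>x. x \<in> M \<Longrightarrow> x \<noteq> 0 \<Longrightarrow> g\<^sub>0 \<le> val x"
begin

lemma ring_eq_valuation_ring_if_least: "A = valuation_ring val"
proof
  show "A \<subseteq> valuation_ring val"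
  proof
    fix a assume a: "a \<in> A"
    show "a \<in> valuation_ring val"
    proof (rule ccontr)
      assume "a \<notin> valuation_ring val"
      then have "a \<noteq> 0" "val a < 0"
        by (auto simp: valuation_ring_def)
      then have "val (a * a * x\<^sub>0) < g\<^sub>0"
        using x\<^sub>0 by (simp add: val_square_mult add_neg_neg)
      moreover have "a * a * x\<^sub>0 \<in> M" "a * a * x\<^sub>0 \<noteq> 0"
        using square_mult_mem a x\<^sub>0 \<open>a \<noteq> 0\<close> by auto
      ultimately show False
        using least by fastforce
    qed
  qed
qed (rule valuation_ring_subset)

lemma eq_Gamma2_if_least:
  assumes pan: "pseudo_angular val \<pi> pan"
  shows "M = Gamma2 val pan A (val ` (M - {0})) (M_g val pan g\<^sub>0 M)"
proof -
  have Least: "(LEAST g. g \<in> val ` (M - {0})) = g\<^sub>0"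
    using x\<^sub>0 least by (intro Least_equality) auto
  have least_level: "y \<in> M" if y: "y \<noteq> 0" "val y = g\<^sub>0" "pan y \<in> M_g val pan g\<^sub>0 M" for y
  proof -
    have "pan y \<noteq> 0"
      using pan y unfolding pseudo_angular_def by blast
    then obtain x where x: "x \<in> M" "x \<noteq> 0" "val x = g\<^sub>0" "pan x = pan y"
      using y unfolding M_g_def by auto
    have "same_sq_class (val x) (val y)"
      unfolding same_sq_class_def using x y by simp
    then obtain u where u: "u \<noteq> 0" "y = u * u * x"
      using pan x y unfolding pseudo_angular_def by blast
    then have "val u = 0"
      using x y by (simp add: val_square_mult)
    then show "y \<in> M"
      using square_mult_mem mem_if_val_eq_0 u x by simp
  qed
  show ?thesis
  proof (intro equalityI subsetI)
    fix y assume y: "y \<in> M"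
    then have "y = 0 \<or> val y = g\<^sub>0 \<and> pan y \<in> M_g val pan g\<^sub>0 M \<or> g\<^sub>0 < val y"
      using least [OF y] unfolding M_g_def by fastforce
    then show "y \<in> Gamma2 val pan A (val ` (M - {0})) (M_g val pan g\<^sub>0 M)"
      using y module_subset unfolding Gamma2_def Least by blast
  next
    fix y assume "y \<in> Gamma2 val pan A (val ` (M - {0})) (M_g val pan g\<^sub>0 M)"
    then have "y = 0 \<or> val y = g\<^sub>0 \<and> pan y \<in> M_g val pan g\<^sub>0 M \<or> g\<^sub>0 < val y"
      unfolding Gamma2_def Least by blast
    then show "y \<in> M"
      using least_level upward_closed [OF x\<^sub>0(1,2)] zero_mem [OF x\<^sub>0(1)] x\<^sub>0(3)
      by (cases "y = 0") auto
  qed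
qed

end

end

theorem mainTheorem19:
  fixes val :: "'k::field \<Rightarrow> 'g::linordered_ab_group_add"
    and \<pi> :: "'k \<Rightarrow> 'f::field"
    and pan :: "'k \<Rightarrow> 'f"
    and A \<M> :: "'k set"
  assumes vf: "valued_field val \<pi>"
    and char2: "(1::'f) + 1 = 0"
    and sqrt: "\<forall>u. strict_unit val \<pi> u \<longrightarrow> (\<exists>y. y * y = u)"
    and pan: "pseudo_angular val \<pi> pan"
    and A: "subring A" "valuation_ring val \<subseteq> A"
    and qm: "quasi_quadratic_module A \<M>"
    and nonzero: "\<exists>x\<in>\<M>. x \<noteq> 0"
    and proper: "\<M> \<noteq> A"
  shows "well_behaved val A (val ` (\<M> - {0})) \<and>
    ((\<not> has_min (val ` (\<M> - {0})) \<and> \<M> = Gamma1 val A (val ` (\<M> - {0})))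
     \<noteq>
     (A = valuation_ring val \<and> has_min (val ` (\<M> - {0})) \<and>
      \<M> = Gamma2 val pan A (val ` (\<M> - {0}))
             (M_g val pan (LEAST g. g \<in> val ` (\<M> - {0})) \<M>)))"
proof -
  interpret valuation val \<pi>
    by unfold_locales (rule vf)
  interpret upward_closed_module val \<pi> A \<M>
    using A qm quasi_quadratic_module_upward_closed [OF char2 sqrt A(2) qm]
    by unfold_locales blast+
  have "A = valuation_ring val \<and>
      \<M> = Gamma2 val pan A (val ` (\<M> - {0})) (M_g val pan (LEAST g. g \<in> val ` (\<M> - {0})) \<M>)"
    if min: "has_min (val ` (\<M> - {0}))"
  proof -
    obtain x\<^sub>0 where x\<^sub>0: "x\<^sub>0 \<in> \<M>" "x\<^sub>0 \<noteq> 0"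
      and least: "\<And>x. x \<in> \<M> \<Longrightarrow> x \<noteq> 0 \<Longrightarrow> val x\<^sub>0 \<le> val x"
      using min unfolding has_min_def by fastforce
    have "(LEAST g. g \<in> val ` (\<M> - {0})) = val x\<^sub>0"
      using x\<^sub>0 least by (intro Least_equality) auto
    then show ?thesis
      using ring_eq_valuation_ring_if_least [OF x\<^sub>0 refl least]
        eq_Gamma2_if_least [OF x\<^sub>0 refl least pan] by simp
  qed
  then show ?thesis
    using well_behaved [OF proper] eq_Gamma1 nonzero by blast
qed

end
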